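(* Let $\Gamma$ be a set with weight function $w:\Gamma\to(0,\infty)$, and let $1<p<\infty$, $p\neq2$. Then there is no embedding (isomorphism onto a subspace) of $\ell^2$ into $m^{p,\infty}(\Gamma,w)$.
   Context: With $\mu(\sigma)=\sum_{\gamma\in\sigma}w(\gamma)$ on $\mathcal P(\Gamma)$, $\ell^{p,\infty}(\Gamma,w)$ is the space of functions $f$ on $\Gamma$ with $\|f\|=\sup_{c>0}c\,(\mu\{|f|>c\})^{1/p}<\infty$ (a Banach space under an equivalent norm), and $m^{p,\infty}(\Gamma,w)$ is its closed subspace generated by the characteristic functions of sets of finite $\mu$-measure. *)

theory Defs
  imports "HOL-Analysis.Analysis"
begin

definition wmeasure :: "('a \<Rightarrow> real) \<Rightarrow> 'a set \<Rightarrow> ennreal" where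
  "wmeasure w S = (SUP F\<in>{F. finite F \<and> F \<subseteq> S}. ennreal (sum w F))"

definition scaled_root :: "real \<Rightarrow> real \<Rightarrow> ennreal \<Rightarrow> ennreal" where
  "scaled_root p c t = (if t = \<infinity> then \<infinity> else ennreal (c * (enn2real t) powr (1 / p)))"

definition wlnorm :: "real \<Rightarrow> ('a \<Rightarrow> real) \<Rightarrow> ('a \<Rightarrow> real) \<Rightarrow> ennreal" where
  "wlnorm p w f = (SUP c\<in>{0<..}. scaled_root p c (wmeasure w {\<gamma>. \<bar>f \<gamma>\<bar> > c}))"

definition lpinf :: "real \<Rightarrow> ('a \<Rightarrow> real) \<Rightarrow> ('a \<Rightarrow> real) set" where
  "lpinf p w = {f. wlnorm p w f < \<infinity>}"

definition simple_fin :: "('a \<Rightarrow> real) \<Rightarrow> ('a \<Rightarrow> real) set" where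
  "simple_fin w = {g. \<exists>n (c::nat \<Rightarrow> real) (A::nat \<Rightarrow> 'a set).
      (\<forall>i<n. wmeasure w (A i) < \<infinity>) \<and> g = (\<lambda>\<gamma>. \<Sum>i<n. c i * indicator (A i) \<gamma>)}"

text \<open>m^{p,infinity}: the closure in lpinf of the span of those characteristic functions.\<close>
definition mpinf :: "real \<Rightarrow> ('a \<Rightarrow> real) \<Rightarrow> ('a \<Rightarrow> real) set" where
  "mpinf p w = {f \<in> lpinf p w. \<forall>e>0. \<exists>g\<in>simple_fin w. wlnorm p w (\<lambda>\<gamma>. f \<gamma> - g \<gamma>) < ennreal e}"

definition l2seq :: "(nat \<Rightarrow> real) set" where
  "l2seq = {x. summable (\<lambda>n. (x n)\<^sup>2)}"

definition l2norm :: "(nat \<Rightarrow> real) \<Rightarrow> real" where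
  "l2norm x = sqrt (\<Sum>n. (x n)\<^sup>2)"

end

theory Submission
  imports Defs "HOL-Real_Asymp.Real_Asymp"
begin

(* If T embedded l2 isomorphically into m^{p,oo}, the images T e_k of the unit vectors would
   tend to 0 pointwise (point evaluation is bounded on weak Lp) and, lying in m^{p,oo}, would be
   concentrated up to small weak norm on finite sets.  A gliding hump argument then produces
   disjointly and finitely supported blocks f_j, small perturbations of a subsequence of the T e_k,
   whose finite sums have weak norm comparable to sqrt |S|.  The distribution functions of
   disjointly supported functions add up.  For p > 2 this bounds the weak norm of a sum of n
   blocks by n^(1/p) sup ||f_j||, which is o(sqrt n).  For p < 2 the upper sqrt n estimate forces
   the weight mu {|f_j| > c} at each fixed level c to become small along a subsequence; this lets
   one extract blocks whose distributions live on essentially separated ranges of levels, and then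
   all sums of these blocks have bounded weak norm, again contradicting the sqrt n lower bound. *)

lemma add_powr_le_powr_add:
  fixes x y q :: real
  assumes "0 \<le> x" "0 \<le> y" "1 \<le> q"
  shows "x powr q + y powr q \<le> (x + y) powr q"
proof (cases "x + y = 0")
  case True
  then have "x = 0" "y = 0" using assms by auto
  then show ?thesis by simp
next
  case False
  have "x powr q = x * x powr (q - 1)" "y powr q = y * y powr (q - 1)"
    using assms by (auto simp: powr_diff)
  moreover have "x * x powr (q - 1) \<le> x * (x + y) powr (q - 1)"
    "y * y powr (q - 1) \<le> y * (x + y) powr (q - 1)"
    using assms by (auto intro!: mult_left_mono powr_mono2)
  moreover have "x * (x + y) powr (q - 1) + y * (x + y) powr (q - 1) = (x + y) powr q"
    using False assms by (simp add: powr_diff add_divide_distrib[symmetric] distrib_right[symmetric])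
  ultimately show ?thesis by linarith
qed

lemma le_square_of_le_mult_sqrt:
  fixes s C :: real
  assumes "0 \<le> s" "0 \<le> C" "s \<le> C * sqrt s"
  shows "s \<le> C\<^sup>2"
proof (cases "s = 0")
  case False
  then have "0 < sqrt s" using assms(1) by simp
  moreover have "sqrt s * sqrt s \<le> C * sqrt s" using assms(1,3) by simp
  ultimately have "sqrt s \<le> C" by (rule mult_right_le_imp_le[rotated])
  then have "(sqrt s)\<^sup>2 \<le> C\<^sup>2" using assms(1) by (intro power_mono) simp_all
  then show ?thesis using assms(1) by simp
qed simp

lemma sum_half_powers_le_one: "finite S \<Longrightarrow> (\<Sum>j\<in>S. (1 / 2 :: real) ^ Suc j) \<le> 1"
  using sum_le_suminf[OF sums_summable[OF power_half_series]] sums_unique[OF power_half_series]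
  by fastforce

lemma two_mult_ennreal_add_one: "0 \<le> b \<Longrightarrow> 2 * (ennreal b + 1) = ennreal (2 * (b + 1))"
  by (subst ennreal_mult) (simp_all add: ennreal_plus)

lemma two_mult_ennreal_quarters:
  assumes "0 \<le> e"
  shows "2 * (ennreal (e / 4) + ennreal (e / 4)) = ennreal e"
proof -
  have "ennreal (e / 4) + ennreal (e / 4) = ennreal (e / 2)"
    using assms by (simp add: ennreal_plus[symmetric] del: ennreal_plus)
  moreover have "ennreal 2 * ennreal (e / 2) = ennreal e"
    using assms by (subst ennreal_mult[symmetric]) auto
  ultimately show ?thesis by simp
qed

section \<open>Separating the levels of a sequence of distribution functions\<close>

lemma frequently_le_of_sublinear_block_sums:
  fixes a b :: "nat \<Rightarrow> real"
  assumes sums: "\<And>s. (\<Sum>j\<in>{N..<N + s}. a j) \<le> b s"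
    and sublinear: "eventually (\<lambda>s. b s < e * real s) sequentially"
  shows "\<exists>j\<ge>N. a j \<le> e"
proof (rule ccontr)
  assume "\<not> (\<exists>j\<ge>N. a j \<le> e)"
  then have large: "e < a j" if "N \<le> j" for j using that by auto
  obtain s where "b s < e * real s" using sublinear eventually_sequentially by auto
  have "e * real s = (\<Sum>j\<in>{N..<N + s}. e)" by simp
  also have "\<dots> \<le> (\<Sum>j\<in>{N..<N + s}. a j)" using large by (intro sum_mono) (auto intro: less_imp_le)
  also have "\<dots> \<le> b s" by (rule sums)
  finally show False using \<open>b s < e * real s\<close> by simp
qed

text \<open>Block \<open>J i\<close> carries its weight \<open>c powr p * \<sigma> (J i) c\<close>, up to \<open>(1/2)\<^sup>i\<^sup>+\<^sup>1\<close>, inside the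
  level window \<open>[Lo i, Up i]\<close>; the windows grow, and \<open>J (Suc i)\<close> is chosen so late that its
  weight is already negligible on the whole window \<open>i\<close>.\<close>

lemma level_windows:
  fixes \<sigma> :: "nat \<Rightarrow> real \<Rightarrow> real" and p :: real
  assumes ends: "\<And>j e. 0 < e \<Longrightarrow> \<exists>l U. 0 < l \<and> (\<forall>c>0. c < l \<or> U < c \<longrightarrow> c powr p * \<sigma> j c \<le> e)"
    and spread: "\<And>L e N. 0 < L \<Longrightarrow> 0 < e \<Longrightarrow> \<exists>j\<ge>N. \<sigma> j L \<le> e"
  obtains J Lo Up where "strict_mono J" "\<And>i. 0 < Lo i" "decseq Lo" "incseq Up"
    "\<And>i c. 0 < c \<Longrightarrow> c < Lo i \<or> Up i < c \<Longrightarrow> c powr p * \<sigma> (J i) c \<le> (1 / 2) ^ Suc i"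
    "\<And>i. Up i powr p * \<sigma> (J (Suc i)) (Lo i) \<le> (1 / 2) ^ Suc (Suc i)"
proof -
  define eps :: "nat \<Rightarrow> real" where "eps i = (1 / 2) ^ Suc i" for i
  have "\<exists>l U. 0 < l \<and> (\<forall>c>0. c < l \<or> U < c \<longrightarrow> c powr p * \<sigma> j c \<le> eps i)" for j i
    by (rule ends) (simp add: eps_def)
  then obtain l U where lU: "\<And>j i. 0 < l j i"
    "\<And>j i c. 0 < c \<Longrightarrow> c < l j i \<or> U j i < c \<Longrightarrow> c powr p * \<sigma> j c \<le> eps i"
    by metis
  let ?P = "\<lambda>i (j, lo, up). 0 < lo \<and> lo \<le> l j i \<and> 0 < up \<and> U j i \<le> up"
  let ?Q = "\<lambda>i (j, lo, up) (j', lo', up'). j < j' \<and> lo' \<le> lo \<and> up \<le> up' \<and> up powr p * \<sigma> j' lo \<le> eps (Suc i)"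
  have "\<exists>y. ?P 0 y" using lU(1) by (intro exI[of _ "(0, l 0 0, max 1 (U 0 0))"]) auto
  moreover have "\<exists>y. ?P (Suc i) y \<and> ?Q i x y" if "?P i x" for i x
  proof -
    obtain j lo up where x: "x = (j, lo, up)" by (cases x)
    with that have "0 < lo" "0 < up" by auto
    then obtain j' where "Suc j \<le> j'" "\<sigma> j' lo \<le> eps (Suc i) / up powr p"
      using spread[of lo "eps (Suc i) / up powr p" "Suc j"] by (auto simp: eps_def)
    then have "up powr p * \<sigma> j' lo \<le> eps (Suc i)" using \<open>0 < up\<close> by (simp add: field_simps)
    then show ?thesis using \<open>Suc j \<le> j'\<close> \<open>0 < lo\<close> \<open>0 < up\<close> lU(1)[of j' "Suc i"] unfolding x
      by (intro exI[of _ "(j', min lo (l j' (Suc i)), max up (U j' (Suc i)))"]) auto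
  qed
  ultimately obtain x where x: "\<And>i. ?P i (x i) \<and> ?Q i (x i) (x (Suc i))"
    using dependent_nat_choice[of ?P ?Q] by blast
  define J where "J i = fst (x i)" for i
  define Lo where "Lo i = fst (snd (x i))" for i
  define Up where "Up i = snd (snd (x i))" for i
  have x_eq: "x i = (J i, Lo i, Up i)" for i unfolding J_def Lo_def Up_def by simp
  have P: "0 < Lo i" "Lo i \<le> l (J i) i" "U (J i) i \<le> Up i" for i
    using x[of i] unfolding x_eq by auto
  have Q: "J i < J (Suc i)" "Lo (Suc i) \<le> Lo i" "Up i \<le> Up (Suc i)"
    "Up i powr p * \<sigma> (J (Suc i)) (Lo i) \<le> eps (Suc i)" for i
    using x[of i] unfolding x_eq[of i] x_eq[of "Suc i"] by auto
  show ?thesis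
  proof (rule that)
    show "strict_mono J" by (rule strict_monoI_Suc) (rule Q(1))
    show "decseq Lo" by (rule decseq_SucI) (rule Q(2))
    show "incseq Up" by (rule incseq_SucI) (rule Q(3))
    show "c powr p * \<sigma> (J i) c \<le> (1 / 2) ^ Suc i" if "0 < c" "c < Lo i \<or> Up i < c" for i c
      using lU(2)[OF \<open>0 < c\<close>] that(2) P(2,3)[of i] unfolding eps_def by fastforce
    show "Up i powr p * \<sigma> (J (Suc i)) (Lo i) \<le> (1 / 2) ^ Suc (Suc i)" for i
      using Q(4) unfolding eps_def .
  qed (rule P(1))
qed

lemma level_separated_sum_le:
  fixes \<sigma> :: "nat \<Rightarrow> real \<Rightarrow> real" and p :: real
  assumes "0 < p" and nonneg: "\<And>i c. 0 < c \<Longrightarrow> 0 \<le> \<sigma> i c"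
    and antimono: "\<And>i c c'. 0 < c \<Longrightarrow> c \<le> c' \<Longrightarrow> \<sigma> i c' \<le> \<sigma> i c"
    and bounded: "\<And>i c. 0 < c \<Longrightarrow> c powr p * \<sigma> i c \<le> K"
    and "\<And>i. 0 < Lo i" "decseq Lo" "incseq Up"
    and outside: "\<And>i c. 0 < c \<Longrightarrow> c < Lo i \<or> Up i < c \<Longrightarrow> c powr p * \<sigma> i c \<le> (1 / 2) ^ Suc i"
    and next_small: "\<And>i. Up i powr p * \<sigma> (Suc i) (Lo i) \<le> (1 / 2) ^ Suc (Suc i)"
    and "0 < c"
  shows "(\<Sum>i<n. c powr p * \<sigma> i c) \<le> K + 1"
proof -
  define i0 where "i0 = (LEAST i. Lo i \<le> c \<and> c \<le> Up i)"
  have "c powr p * \<sigma> i c \<le> (1 / 2) ^ Suc i" if "i \<noteq> i0" for i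
  proof (cases "Lo i \<le> c \<and> c \<le> Up i")
    case True
    then have "i0 < i" using \<open>i \<noteq> i0\<close> Least_le[of "\<lambda>i. Lo i \<le> c \<and> c \<le> Up i" i]
      unfolding i0_def by simp
    then obtain k where i: "i = Suc k" and "i0 \<le> k" by (cases i) auto
    have "Lo i0 \<le> c \<and> c \<le> Up i0" using True LeastI[of "\<lambda>i. Lo i \<le> c \<and> c \<le> Up i" i] unfolding i0_def by blast
    then have "Lo k \<le> c" "c \<le> Up k"
      using decseqD[OF \<open>decseq Lo\<close> \<open>i0 \<le> k\<close>] incseqD[OF \<open>incseq Up\<close> \<open>i0 \<le> k\<close>] by auto
    then have "c powr p * \<sigma> i c \<le> Up k powr p * \<sigma> i (Lo k)"
      using \<open>0 < c\<close> \<open>0 < p\<close> nonneg antimono \<open>0 < Lo k\<close> by (intro mult_mono powr_mono2) auto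
    also have "\<dots> \<le> (1 / 2) ^ Suc i" using next_small[of k] unfolding i .
    finally show ?thesis .
  qed (use outside \<open>0 < c\<close> in auto)
  then have "c powr p * \<sigma> i c \<le> (1 / 2) ^ Suc i + (if i = i0 then K else 0)" for i
  proof (cases "i = i0")
    case True
    have "0 \<le> (1 / 2 :: real) ^ Suc i" by simp
    then show ?thesis unfolding if_P[OF True] using bounded[OF \<open>0 < c\<close>, of i] by linarith
  qed simp
  then have "(\<Sum>i<n. c powr p * \<sigma> i c) \<le> (\<Sum>i<n. (1 / 2) ^ Suc i + (if i = i0 then K else 0))"
    by (intro sum_mono)
  also have "\<dots> = (\<Sum>i<n. (1 / 2) ^ Suc i) + (\<Sum>i<n. if i = i0 then K else 0)"
    by (rule sum.distrib)
  also have "\<dots> \<le> 1 + K"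
  proof -
    have "0 \<le> K" using bounded[OF \<open>0 < c\<close>, of 0] nonneg[OF \<open>0 < c\<close>, of 0]
      by (meson order_trans mult_nonneg_nonneg powr_ge_zero)
    then show ?thesis using sum_half_powers_le_one[of "{..<n}"] by (intro add_mono) (auto simp: sum.delta)
  qed
  finally show ?thesis by simp
qed

lemma level_separated_subsequence:
  fixes \<sigma> :: "nat \<Rightarrow> real \<Rightarrow> real" and p :: real
  assumes "0 < p" and nonneg: "\<And>j c. 0 < c \<Longrightarrow> 0 \<le> \<sigma> j c"
    and antimono: "\<And>j c c'. 0 < c \<Longrightarrow> c \<le> c' \<Longrightarrow> \<sigma> j c' \<le> \<sigma> j c"
    and bounded: "\<And>j c. 0 < c \<Longrightarrow> c powr p * \<sigma> j c \<le> K"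
    and ends: "\<And>j e. 0 < e \<Longrightarrow> \<exists>l U. 0 < l \<and> (\<forall>c>0. c < l \<or> U < c \<longrightarrow> c powr p * \<sigma> j c \<le> e)"
    and spread: "\<And>L e N. 0 < L \<Longrightarrow> 0 < e \<Longrightarrow> \<exists>j\<ge>N. \<sigma> j L \<le> e"
  obtains J :: "nat \<Rightarrow> nat" where "strict_mono J" "\<And>n c. 0 < c \<Longrightarrow> (\<Sum>i<n. c powr p * \<sigma> (J i) c) \<le> K + 1"
proof -
  obtain J :: "nat \<Rightarrow> nat" and Lo Up :: "nat \<Rightarrow> real" where J: "strict_mono J"
    and windows: "\<And>i. 0 < Lo i" "decseq Lo" "incseq Up"
    "\<And>i c. 0 < c \<Longrightarrow> c < Lo i \<or> Up i < c \<Longrightarrow> c powr p * \<sigma> (J i) c \<le> (1 / 2) ^ Suc i"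
    "\<And>i. Up i powr p * \<sigma> (J (Suc i)) (Lo i) \<le> (1 / 2) ^ Suc (Suc i)"
    using level_windows[of p \<sigma>, OF ends spread] by metis
  show ?thesis
  proof (rule that[OF J])
    fix n :: nat and c :: real assume "0 < c"
    show "(\<Sum>i<n. c powr p * \<sigma> (J i) c) \<le> K + 1"
      by (rule level_separated_sum_le[of p "\<lambda>i. \<sigma> (J i)" K Lo Up, OF \<open>0 < p\<close> nonneg antimono bounded
            windows \<open>0 < c\<close>])
  qed
qed

section \<open>Finitely supported sequences in l2\<close>

definition l2_linear :: "((nat \<Rightarrow> real) \<Rightarrow> 'a \<Rightarrow> real) \<Rightarrow> bool" where
  "l2_linear T \<longleftrightarrow>
     (\<forall>x\<in>l2seq. \<forall>y\<in>l2seq. \<forall>a b. T (\<lambda>n. a * x n + b * y n) = (\<lambda>\<gamma>. a * T x \<gamma> + b * T y \<gamma>))"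

lemma l2_linearD:
  "l2_linear T \<Longrightarrow> x \<in> l2seq \<Longrightarrow> y \<in> l2seq \<Longrightarrow>
    T (\<lambda>n. a * x n + b * y n) = (\<lambda>\<gamma>. a * T x \<gamma> + b * T y \<gamma>)"
  unfolding l2_linear_def by blast

lemma l2seq_finite_support:
  assumes "finite K" "\<And>n. n \<notin> K \<Longrightarrow> x n = 0"
  shows "x \<in> l2seq"
  unfolding l2seq_def mem_Collect_eq by (rule summable_finite[of K]) (use assms in auto)

lemma l2norm_finite_support:
  assumes "finite K" "\<And>n. n \<notin> K \<Longrightarrow> x n = 0"
  shows "l2norm x = sqrt (\<Sum>n\<in>K. (x n)\<^sup>2)"
  unfolding l2norm_def by (subst suminf_finite[of K]) (use assms in auto)

lemma sum_scaled_indicator_singleton: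
  "finite K \<Longrightarrow> (\<Sum>k\<in>K. c k * indicator {k} n) = (if n \<in> K then c n else (0::real))"
  by (simp add: indicator_def if_distrib cong: if_cong)

lemma l2seq_indicator: "finite K \<Longrightarrow> indicator K \<in> l2seq"
  by (rule l2seq_finite_support) auto

lemma l2norm_indicator: "finite K \<Longrightarrow> l2norm (indicator K) = sqrt (card K)"
  by (subst l2norm_finite_support[of K]) auto

lemma l2_linear_sum:
  assumes T: "l2_linear T" and "finite K"
  shows "T (\<lambda>n. \<Sum>k\<in>K. c k * indicator {k} n) = (\<lambda>\<gamma>. \<Sum>k\<in>K. c k * T (indicator {k}) \<gamma>)"
  using \<open>finite K\<close>
proof (induction K rule: finite_induct)
  case empty
  have "T (\<lambda>n. 0 * indicator {0} n + 0 * indicator {0} n) =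
        (\<lambda>\<gamma>. 0 * T (indicator {0}) \<gamma> + 0 * T (indicator {0}) \<gamma>)"
    by (rule l2_linearD[OF T]) (simp_all add: l2seq_indicator)
  then show ?case by simp
next
  case (insert k K)
  have "(\<lambda>n. \<Sum>k\<in>K. c k * indicator {k} n) \<in> l2seq"
    using insert.hyps
    by (intro l2seq_finite_support[of K] sum.neutral) (auto simp: indicator_def)
  then have "T (\<lambda>n. c k * indicator {k} n + 1 * (\<Sum>k\<in>K. c k * indicator {k} n)) =
      (\<lambda>\<gamma>. c k * T (indicator {k}) \<gamma> + 1 * T (\<lambda>n. \<Sum>k\<in>K. c k * indicator {k} n) \<gamma>)"
    by (intro l2_linearD[OF T]) (simp_all add: l2seq_indicator)
  then show ?case by (simp only: sum.insert[OF insert.hyps] mult_1_left insert.IH)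
qed

lemma l2_linear_indicator:
  assumes "l2_linear T" "finite K"
  shows "T (indicator K) = (\<lambda>\<gamma>. \<Sum>k\<in>K. T (indicator {k}) \<gamma>)"
proof -
  have "indicator K = (\<lambda>n. \<Sum>k\<in>K. 1 * indicator {k} n :: real)"
    using assms(2) by (auto simp: sum_scaled_indicator_singleton indicator_def)
  then show ?thesis using l2_linear_sum[OF assms, of "\<lambda>_. 1"] by simp
qed

lemma l2_linear_indicator_image:
  assumes "l2_linear T" "finite S" "inj_on m S"
  shows "(\<lambda>\<gamma>. \<Sum>j\<in>S. T (indicator {m j}) \<gamma>) = T (indicator (m ` S))"
proof -
  have "T (indicator (m ` S)) = (\<lambda>\<gamma>. \<Sum>k\<in>m ` S. T (indicator {k}) \<gamma>)"
    using assms(1,2) by (intro l2_linear_indicator) auto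
  also have "\<dots> = (\<lambda>\<gamma>. \<Sum>j\<in>S. T (indicator {m j}) \<gamma>)"
    by (simp add: sum.reindex[OF assms(3)])
  finally show ?thesis by simp
qed

section \<open>The weighted counting measure and the weak Lp quasi-norm\<close>

context
  fixes w :: "'a \<Rightarrow> real"
  assumes weight_nonneg: "\<And>\<gamma>. 0 \<le> w \<gamma>"
begin

lemma wmeasure_mono: "S \<subseteq> S' \<Longrightarrow> wmeasure w S \<le> wmeasure w S'"
  unfolding wmeasure_def by (rule SUP_subset_mono) auto

lemma wmeasure_finite:
  assumes "finite F"
  shows "wmeasure w F = ennreal (sum w F)"
  unfolding wmeasure_def
proof (rule antisym)
  show "(SUP G\<in>{G. finite G \<and> G \<subseteq> F}. ennreal (sum w G)) \<le> ennreal (sum w F)"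
    by (rule SUP_least) (auto intro!: ennreal_leI sum_mono2 assms weight_nonneg)
  show "ennreal (sum w F) \<le> (SUP G\<in>{G. finite G \<and> G \<subseteq> F}. ennreal (sum w G))"
    by (rule SUP_upper) (use assms in auto)
qed

lemma wmeasure_Un_le: "wmeasure w (S \<union> S') \<le> wmeasure w S + wmeasure w S'"
  unfolding wmeasure_def
proof (rule SUP_least)
  fix F assume F: "F \<in> {F. finite F \<and> F \<subseteq> S \<union> S'}"
  have "sum w F \<le> sum w (F \<inter> S) + sum w (F - S)"
    using F by (simp add: sum.Int_Diff[of F w S])
  then have "ennreal (sum w F) \<le> ennreal (sum w (F \<inter> S)) + ennreal (sum w (F - S))"
    by (simp add: ennreal_plus[symmetric] sum_nonneg weight_nonneg ennreal_leI del: ennreal_plus)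
  also have "\<dots> \<le> (SUP F\<in>{F. finite F \<and> F \<subseteq> S}. ennreal (sum w F))
                 + (SUP F\<in>{F. finite F \<and> F \<subseteq> S'}. ennreal (sum w F))"
    by (intro add_mono SUP_upper) (use F in auto)
  finally show "ennreal (sum w F) \<le> (SUP F\<in>{F. finite F \<and> F \<subseteq> S}. ennreal (sum w F))
                 + (SUP F\<in>{F. finite F \<and> F \<subseteq> S'}. ennreal (sum w F))" .
qed

lemma wmeasure_UN_le: "finite I \<Longrightarrow> wmeasure w (\<Union>i\<in>I. X i) \<le> (\<Sum>i\<in>I. wmeasure w (X i))"
proof (induction I rule: finite_induct)
  case empty
  then show ?case by (simp add: wmeasure_finite)
next
  case (insert i I)
  have "wmeasure w (\<Union>i\<in>insert i I. X i) \<le> wmeasure w (X i) + wmeasure w (\<Union>i\<in>I. X i)"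
    using wmeasure_Un_le by simp
  also have "\<dots> \<le> wmeasure w (X i) + (\<Sum>i\<in>I. wmeasure w (X i))"
    using insert.IH by (rule add_left_mono)
  finally show ?case using insert.hyps by simp
qed

lemma wmeasure_finite_subset_approx:
  assumes fin: "wmeasure w E < \<infinity>" and "0 < d"
  obtains F where "finite F" "F \<subseteq> E" "wmeasure w (E - F) \<le> ennreal d"
proof (cases "wmeasure w E \<le> ennreal d")
  case True
  then show ?thesis using that[of "{}"] by simp
next
  case False
  define m where "m = enn2real (wmeasure w E)"
  have E: "wmeasure w E = ennreal m" using fin unfolding m_def by simp
  have "d < m" using False E by (metis ennreal_leI not_le_imp_less)
  then have "ennreal (m - d) < wmeasure w E"
    using \<open>0 < d\<close> E by (simp add: ennreal_lessI)
  then obtain F where F: "finite F" "F \<subseteq> E" "ennreal (m - d) < ennreal (sum w F)"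
    unfolding wmeasure_def by (subst (asm) less_SUP_iff) auto
  have "m - d < sum w F" using F(3) \<open>d < m\<close> by (subst (asm) ennreal_less_iff) auto
  have "wmeasure w (E - F) \<le> ennreal d"
    unfolding wmeasure_def
  proof (rule SUP_least)
    fix G assume G: "G \<in> {G. finite G \<and> G \<subseteq> E - F}"
    have "ennreal (sum w (G \<union> F)) \<le> ennreal m"
      unfolding E[symmetric] wmeasure_def by (rule SUP_upper) (use G F in auto)
    then have "sum w (G \<union> F) \<le> m"
      using \<open>0 < d\<close> \<open>d < m\<close> by simp
    moreover have "sum w (G \<union> F) = sum w G + sum w F"
      using G F by (intro sum.union_disjoint) auto
    ultimately show "ennreal (sum w G) \<le> ennreal d"
      using \<open>m - d < sum w F\<close> by (intro ennreal_leI) linarith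
  qed
  with F show ?thesis using that by blast
qed

context
  fixes p :: real
  assumes p_pos: "0 < p"
begin

lemma scaled_root_le_iff:
  assumes "0 < c" "0 \<le> M"
  shows "scaled_root p c t \<le> ennreal M \<longleftrightarrow> t \<le> ennreal ((M / c) powr p)"
proof
  assume le: "scaled_root p c t \<le> ennreal M"
  then have "t \<noteq> \<infinity>" by (auto simp: scaled_root_def top_unique)
  then have t: "t = ennreal (enn2real t)" by (simp add: less_top)
  have "c * enn2real t powr (1 / p) \<le> M"
    using le \<open>t \<noteq> \<infinity>\<close> assms(2) by (simp add: scaled_root_def)
  then have "enn2real t powr (1 / p) \<le> M / c" using assms(1) by (simp add: field_simps)
  then have "(enn2real t powr (1 / p)) powr p \<le> (M / c) powr p"
    using p_pos by (intro powr_mono2) auto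
  then have "enn2real t \<le> (M / c) powr p" using p_pos by (simp add: powr_powr)
  then show "t \<le> ennreal ((M / c) powr p)" by (subst t) (rule ennreal_leI)
next
  assume le: "t \<le> ennreal ((M / c) powr p)"
  then have "t \<noteq> \<infinity>" by (auto simp: top_unique)
  have "enn2real t \<le> (M / c) powr p" using le by (simp add: enn2real_leI)
  then have "enn2real t powr (1 / p) \<le> ((M / c) powr p) powr (1 / p)"
    using p_pos by (intro powr_mono2) auto
  then have "enn2real t powr (1 / p) \<le> M / c" using p_pos assms by (simp add: powr_powr)
  then have "c * enn2real t powr (1 / p) \<le> M" using assms(1) by (simp add: field_simps)
  then show "scaled_root p c t \<le> ennreal M"
    using \<open>t \<noteq> \<infinity>\<close> by (simp add: scaled_root_def ennreal_leI)
qed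

lemma wlnorm_le_iff:
  assumes "0 \<le> M"
  shows "wlnorm p w f \<le> ennreal M \<longleftrightarrow> (\<forall>c>0. wmeasure w {\<gamma>. c < \<bar>f \<gamma>\<bar>} \<le> ennreal ((M / c) powr p))"
  unfolding wlnorm_def SUP_le_iff using scaled_root_le_iff[OF _ assms] by auto

lemma wlnorm_leI:
  assumes "0 \<le> M" "\<And>c. 0 < c \<Longrightarrow> wmeasure w {\<gamma>. c < \<bar>f \<gamma>\<bar>} \<le> ennreal ((M / c) powr p)"
  shows "wlnorm p w f \<le> ennreal M"
  using wlnorm_le_iff assms by blast

lemma wlnorm_leD:
  assumes "0 \<le> M" "wlnorm p w f \<le> ennreal M" "0 < c"
  shows "wmeasure w {\<gamma>. c < \<bar>f \<gamma>\<bar>} \<le> ennreal ((M / c) powr p)"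
  using wlnorm_le_iff assms by blast

lemma scaled_root_mono:
  assumes "0 < c" "t \<le> t'"
  shows "scaled_root p c t \<le> scaled_root p c t'"
proof (cases "t' = \<infinity>")
  case False
  then have "t \<noteq> \<infinity>" using assms(2) by (auto simp: top_unique)
  have "enn2real t \<le> enn2real t'" using assms(2) False by (simp add: enn2real_mono top.not_eq_extremum)
  then have "c * enn2real t powr (1 / p) \<le> c * enn2real t' powr (1 / p)"
    using assms(1) p_pos by (intro mult_left_mono powr_mono2) auto
  then show ?thesis using False \<open>t \<noteq> \<infinity>\<close> by (simp add: scaled_root_def ennreal_leI)
qed (simp add: scaled_root_def)

lemma wlnorm_mono:
  assumes "\<And>\<gamma>. \<bar>f \<gamma>\<bar> \<le> \<bar>g \<gamma>\<bar>"
  shows "wlnorm p w f \<le> wlnorm p w g"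
  unfolding wlnorm_def
proof (rule SUP_mono)
  fix c :: real assume c: "c \<in> {0<..}"
  have "{\<gamma>. c < \<bar>f \<gamma>\<bar>} \<subseteq> {\<gamma>. c < \<bar>g \<gamma>\<bar>}" using assms by (auto intro: less_le_trans)
  then have "scaled_root p c (wmeasure w {\<gamma>. c < \<bar>f \<gamma>\<bar>}) \<le> scaled_root p c (wmeasure w {\<gamma>. c < \<bar>g \<gamma>\<bar>})"
    using c by (intro scaled_root_mono wmeasure_mono) auto
  then show "\<exists>c'\<in>{0<..}. scaled_root p c (wmeasure w {\<gamma>. c < \<bar>f \<gamma>\<bar>})
      \<le> scaled_root p c' (wmeasure w {\<gamma>. c' < \<bar>g \<gamma>\<bar>})"
    using c by blast
qed

lemma wlnorm_add_le:
  assumes "1 \<le> p" and pointwise: "\<And>\<gamma>. \<bar>f \<gamma>\<bar> \<le> \<bar>g \<gamma>\<bar> + \<bar>k \<gamma>\<bar>"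
  shows "wlnorm p w f \<le> 2 * (wlnorm p w g + wlnorm p w k)"
proof (cases "wlnorm p w g = \<infinity> \<or> wlnorm p w k = \<infinity>")
  case False
  then obtain a b where a: "0 \<le> a" "wlnorm p w g = ennreal a" and b: "0 \<le> b" "wlnorm p w k = ennreal b"
    by (metis ennreal_cases infinity_ennreal_def)
  have "wlnorm p w f \<le> ennreal (2 * (a + b))"
  proof (rule wlnorm_leI)
    show "0 \<le> 2 * (a + b)" using a b by simp
    fix c :: real assume "0 < c"
    have "{\<gamma>. c < \<bar>f \<gamma>\<bar>} \<subseteq> {\<gamma>. c / 2 < \<bar>g \<gamma>\<bar>} \<union> {\<gamma>. c / 2 < \<bar>k \<gamma>\<bar>}"
    proof
      fix \<gamma> assume "\<gamma> \<in> {\<gamma>. c < \<bar>f \<gamma>\<bar>}"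
      then have "c < \<bar>g \<gamma>\<bar> + \<bar>k \<gamma>\<bar>" using pointwise[of \<gamma>] by simp
      then show "\<gamma> \<in> {\<gamma>. c / 2 < \<bar>g \<gamma>\<bar>} \<union> {\<gamma>. c / 2 < \<bar>k \<gamma>\<bar>}" by auto
    qed
    then have "wmeasure w {\<gamma>. c < \<bar>f \<gamma>\<bar>} \<le> wmeasure w {\<gamma>. c / 2 < \<bar>g \<gamma>\<bar>} + wmeasure w {\<gamma>. c / 2 < \<bar>k \<gamma>\<bar>}"
      by (meson order_trans wmeasure_Un_le wmeasure_mono)
    also have "\<dots> \<le> ennreal ((a / (c / 2)) powr p) + ennreal ((b / (c / 2)) powr p)"
      using \<open>0 < c\<close> a b by (intro add_mono wlnorm_leD) auto
    also have "\<dots> \<le> ennreal ((a / (c / 2) + b / (c / 2)) powr p)"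
      using a b \<open>0 < c\<close> \<open>1 \<le> p\<close>
      by (simp add: ennreal_plus[symmetric] ennreal_leI add_powr_le_powr_add del: ennreal_plus)
    also have "a / (c / 2) + b / (c / 2) = 2 * (a + b) / c" by (simp add: add_divide_distrib mult.commute)
    finally show "wmeasure w {\<gamma>. c < \<bar>f \<gamma>\<bar>} \<le> ennreal ((2 * (a + b) / c) powr p)" .
  qed
  also have "\<dots> = 2 * (wlnorm p w g + wlnorm p w k)"
    using a b by (simp add: ennreal_plus ennreal_mult)
  finally show ?thesis .
qed (auto simp: ennreal_mult_top)

lemma wlnorm_perturb_le:
  assumes "1 \<le> p" "\<And>\<gamma>. Y \<gamma> = X \<gamma> + R \<gamma>" "wlnorm p w R \<le> 1"
  shows "wlnorm p w X \<le> 2 * (wlnorm p w Y + 1)" "wlnorm p w Y \<le> 2 * (wlnorm p w X + 1)"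
proof -
  have "wlnorm p w X \<le> 2 * (wlnorm p w Y + wlnorm p w R)"
    by (rule wlnorm_add_le[OF \<open>1 \<le> p\<close>]) (simp add: assms(2))
  also have "\<dots> \<le> 2 * (wlnorm p w Y + 1)"
    using assms(3) by (intro mult_left_mono add_left_mono) simp_all
  finally show "wlnorm p w X \<le> 2 * (wlnorm p w Y + 1)" .
  have "wlnorm p w Y \<le> 2 * (wlnorm p w X + wlnorm p w R)"
    by (rule wlnorm_add_le[OF \<open>1 \<le> p\<close>]) (simp add: assms(2))
  also have "\<dots> \<le> 2 * (wlnorm p w X + 1)"
    using assms(3) by (intro mult_left_mono add_left_mono) simp_all
  finally show "wlnorm p w Y \<le> 2 * (wlnorm p w X + 1)" .
qed

lemma wlnorm_point_bound:
  assumes "0 < w \<gamma>" "0 \<le> M" "wlnorm p w f \<le> ennreal M"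
  shows "\<bar>f \<gamma>\<bar> \<le> M * w \<gamma> powr (-1 / p)"
proof (rule ccontr)
  define m where "m = M * w \<gamma> powr (-1 / p)"
  assume "\<not> \<bar>f \<gamma>\<bar> \<le> M * w \<gamma> powr (-1 / p)"
  then have "m < \<bar>f \<gamma>\<bar>" unfolding m_def by simp
  moreover have "0 \<le> m" using assms(2) unfolding m_def by simp
  ultimately obtain c where c: "0 < c" "m < c" "c < \<bar>f \<gamma>\<bar>"
    using dense by (metis le_less_trans)
  have "ennreal (w \<gamma>) \<le> wmeasure w {\<gamma>'. c < \<bar>f \<gamma>'\<bar>}"
    using wmeasure_finite[of "{\<gamma>}"] wmeasure_mono[of "{\<gamma>}"] c by auto
  also have "\<dots> \<le> ennreal ((M / c) powr p)" using wlnorm_leD[OF assms(2,3) c(1)] .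
  finally have "w \<gamma> \<le> (M / c) powr p" by (simp add: ennreal_le_iff[symmetric] del: ennreal_le_iff)
  moreover have "(M / c) powr p < w \<gamma>"
  proof (cases "M = 0")
    case False
    then have "0 < m" using assms(1,2) unfolding m_def by simp
    have "M / c < M / m" using False assms(2) c \<open>0 < m\<close> by (intro divide_strict_left_mono) auto
    also have "M / m = w \<gamma> powr (1 / p)"
      using False assms(1) unfolding m_def by (simp add: powr_minus_divide divide_simps)
    finally have "(M / c) powr p < (w \<gamma> powr (1 / p)) powr p"
      using False assms(2) c p_pos by (intro powr_less_mono2) auto
    then show ?thesis using p_pos assms(1) by (simp add: powr_powr)
  qed (use assms(1) in simp)
  ultimately show False by simp
qed

lemma wlnorm_le_of_bounded_support:
  assumes "0 \<le> K" "\<And>\<gamma>. \<bar>g \<gamma>\<bar> \<le> K" "\<And>\<gamma>. \<gamma> \<notin> E \<Longrightarrow> g \<gamma> = 0" "0 \<le> d" "wmeasure w E \<le> ennreal d"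
  shows "wlnorm p w g \<le> ennreal (K * d powr (1 / p))"
proof (rule wlnorm_leI)
  show "0 \<le> K * d powr (1 / p)" using assms(1) by simp
  fix c :: real assume "0 < c"
  show "wmeasure w {\<gamma>. c < \<bar>g \<gamma>\<bar>} \<le> ennreal ((K * d powr (1 / p) / c) powr p)"
  proof (cases "K \<le> c")
    case True
    have "\<not> c < \<bar>g \<gamma>\<bar>" for \<gamma> using assms(2)[of \<gamma>] True by linarith
    then have empty: "{\<gamma>. c < \<bar>g \<gamma>\<bar>} = {}" by blast
    show ?thesis unfolding empty by (simp add: wmeasure_finite)
  next
    case False
    have "\<gamma> \<in> E" if "c < \<bar>g \<gamma>\<bar>" for \<gamma> using assms(3)[of \<gamma>] that \<open>0 < c\<close> by (cases "\<gamma> \<in> E") auto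
    then have "{\<gamma>. c < \<bar>g \<gamma>\<bar>} \<subseteq> E" by blast
    then have "wmeasure w {\<gamma>. c < \<bar>g \<gamma>\<bar>} \<le> ennreal d" using assms(5) by (meson order_trans wmeasure_mono)
    also have "1 \<le> (K / c) powr p"
      using False \<open>0 < c\<close> p_pos by (intro ge_one_powr_ge_zero) auto
    then have "d \<le> (K / c) powr p * d"
      using mult_right_mono[OF _ \<open>0 \<le> d\<close>] by fastforce
    also have "\<dots> = (K * d powr (1 / p) / c) powr p"
      using assms(1,4) \<open>0 < c\<close> p_pos by (simp add: powr_mult powr_divide powr_powr)
    finally show ?thesis by (simp add: ennreal_leI)
  qed
qed

lemma eventually_wlnorm_restrict_finite_le:
  assumes "finite G" and null: "\<And>\<gamma>. ((\<lambda>n. h n \<gamma>) \<longlongrightarrow> 0) sequentially" and "0 < e"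
  shows "eventually (\<lambda>n. wlnorm p w (\<lambda>\<gamma>. if \<gamma> \<in> G then h n \<gamma> else 0) \<le> ennreal e) sequentially"
proof -
  define d where "d = e / (sum w G powr (1 / p) + 1)"
  have "0 < d" using \<open>0 < e\<close> unfolding d_def by (simp add: add_nonneg_pos)
  have "d * sum w G powr (1 / p) \<le> d * (sum w G powr (1 / p) + 1)"
    using \<open>0 < d\<close> by simp
  also have "\<dots> = e"
    unfolding d_def using add_nonneg_pos[OF powr_ge_zero[of "sum w G" "1 / p"] zero_less_one] by simp
  finally have "d * sum w G powr (1 / p) \<le> e" .
  have "\<forall>\<gamma>\<in>G. eventually (\<lambda>n. \<bar>h n \<gamma>\<bar> < d) sequentially"
    using null \<open>0 < d\<close> by (auto simp: tendsto_iff dist_real_def)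
  then have "eventually (\<lambda>n. \<forall>\<gamma>\<in>G. \<bar>h n \<gamma>\<bar> < d) sequentially"
    using assms(1) by (simp add: eventually_ball_finite)
  then show ?thesis
  proof (rule eventually_mono)
    fix n assume "\<forall>\<gamma>\<in>G. \<bar>h n \<gamma>\<bar> < d"
    then have "wlnorm p w (\<lambda>\<gamma>. if \<gamma> \<in> G then h n \<gamma> else 0) \<le> ennreal (d * sum w G powr (1 / p))"
      using \<open>0 < d\<close> wmeasure_finite[OF assms(1)]
      by (intro wlnorm_le_of_bounded_support[where E=G]) (auto simp: sum_nonneg weight_nonneg)
    also have "\<dots> \<le> ennreal e" using \<open>d * sum w G powr (1 / p) \<le> e\<close> by (rule ennreal_leI)
    finally show "wlnorm p w (\<lambda>\<gamma>. if \<gamma> \<in> G then h n \<gamma> else 0) \<le> ennreal e" .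
  qed
qed

lemma simple_fin_tail_le:
  assumes "g \<in> simple_fin w" "0 < e"
  obtains F where "finite F" "wlnorm p w (\<lambda>\<gamma>. if \<gamma> \<in> F then 0 else g \<gamma>) \<le> ennreal e"
proof -
  obtain n :: nat and a A where fin: "\<forall>i<n. wmeasure w (A i) < \<infinity>"
    and g: "g = (\<lambda>\<gamma>. \<Sum>i<n. a i * indicator (A i) \<gamma>)"
    using assms(1) unfolding simple_fin_def by blast
  define E where "E = (\<Union>i<n. A i)"
  have "wmeasure w E \<le> (\<Sum>i<n. wmeasure w (A i))" unfolding E_def by (rule wmeasure_UN_le) simp
  also have "\<dots> < \<infinity>" using fin by (simp add: infinity_ennreal_def)
  finally have "wmeasure w E < \<infinity>" .
  define K where "K = (\<Sum>i<n. \<bar>a i\<bar>)"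
  have "0 \<le> K" unfolding K_def by (simp add: sum_nonneg)
  have g_le: "\<bar>g \<gamma>\<bar> \<le> K" for \<gamma>
    unfolding g K_def by (rule order_trans[OF sum_abs sum_mono]) (auto simp: indicator_def)
  have g_outside: "g \<gamma> = 0" if "\<gamma> \<notin> E" for \<gamma> using that unfolding g E_def by (auto simp: indicator_def)
  define d where "d = (e / (K + 1)) powr p"
  have "0 < d" using \<open>0 < e\<close> \<open>0 \<le> K\<close> unfolding d_def by simp
  obtain F where "finite F" "F \<subseteq> E" "wmeasure w (E - F) \<le> ennreal d"
    using wmeasure_finite_subset_approx[OF \<open>wmeasure w E < \<infinity>\<close> \<open>0 < d\<close>] .
  have "K * d powr (1 / p) = K * (e / (K + 1))"
    unfolding d_def using \<open>0 < e\<close> \<open>0 \<le> K\<close> p_pos by (simp add: powr_powr)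
  also have "\<dots> \<le> e" using \<open>0 < e\<close> \<open>0 \<le> K\<close> by (simp add: field_simps)
  finally have "ennreal (K * d powr (1 / p)) \<le> ennreal e" by (rule ennreal_leI)
  moreover have "wlnorm p w (\<lambda>\<gamma>. if \<gamma> \<in> F then 0 else g \<gamma>) \<le> ennreal (K * d powr (1 / p))"
    using \<open>0 \<le> K\<close> g_le g_outside \<open>0 < d\<close> \<open>wmeasure w (E - F) \<le> ennreal d\<close>
    by (intro wlnorm_le_of_bounded_support[where E="E - F"]) auto
  ultimately show ?thesis using \<open>finite F\<close> that by (meson order_trans)
qed

lemma mpinf_tail_le:
  assumes "1 \<le> p" "f \<in> mpinf p w" "0 < e"
  obtains F where "finite F" "wlnorm p w (\<lambda>\<gamma>. if \<gamma> \<in> F then 0 else f \<gamma>) \<le> ennreal e"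
proof -
  obtain g where g: "g \<in> simple_fin w" and fg: "wlnorm p w (\<lambda>\<gamma>. f \<gamma> - g \<gamma>) < ennreal (e / 4)"
    using assms(2,3) unfolding mpinf_def by (auto dest!: spec[of _ "e / 4"])
  obtain F where "finite F" and gF: "wlnorm p w (\<lambda>\<gamma>. if \<gamma> \<in> F then 0 else g \<gamma>) \<le> ennreal (e / 4)"
    using simple_fin_tail_le[OF g, of "e / 4"] \<open>0 < e\<close> by auto
  have "wlnorm p w (\<lambda>\<gamma>. if \<gamma> \<in> F then 0 else f \<gamma>)
      \<le> 2 * (wlnorm p w (\<lambda>\<gamma>. f \<gamma> - g \<gamma>) + wlnorm p w (\<lambda>\<gamma>. if \<gamma> \<in> F then 0 else g \<gamma>))"
    by (rule wlnorm_add_le[OF assms(1)]) auto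
  also have "\<dots> \<le> 2 * (ennreal (e / 4) + ennreal (e / 4))"
    using fg gF by (intro mult_left_mono add_mono) auto
  also have "\<dots> = ennreal e" using \<open>0 < e\<close> by (intro two_mult_ennreal_quarters) simp
  finally show ?thesis using \<open>finite F\<close> that by blast
qed

lemma wlnorm_sum_le_one:
  assumes "1 \<le> p" "finite S" and small: "\<And>j. j \<in> S \<Longrightarrow> wlnorm p w (r j) \<le> ennreal ((1 / 4) ^ Suc j)"
  shows "wlnorm p w (\<lambda>\<gamma>. \<Sum>j\<in>S. r j \<gamma>) \<le> ennreal 1"
proof (rule wlnorm_leI)
  show "(0::real) \<le> 1" by simp
  fix c :: real assume "0 < c"
  define t where "t j = c * (1 / 2) ^ Suc j" for j
  have "{\<gamma>. c < \<bar>\<Sum>j\<in>S. r j \<gamma>\<bar>} \<subseteq> (\<Union>j\<in>S. {\<gamma>. t j < \<bar>r j \<gamma>\<bar>})"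
  proof (rule subsetI, rule ccontr)
    fix \<gamma> assume "\<gamma> \<in> {\<gamma>. c < \<bar>\<Sum>j\<in>S. r j \<gamma>\<bar>}" "\<gamma> \<notin> (\<Union>j\<in>S. {\<gamma>. t j < \<bar>r j \<gamma>\<bar>})"
    then have "c < \<bar>\<Sum>j\<in>S. r j \<gamma>\<bar>" "\<And>j. j \<in> S \<Longrightarrow> \<bar>r j \<gamma>\<bar> \<le> t j" by auto
    moreover have "(\<Sum>j\<in>S. t j) \<le> c"
      using sum_half_powers_le_one[OF assms(2)] \<open>0 < c\<close>
      unfolding t_def sum_distrib_left[symmetric] by (simp add: mult_left_le)
    ultimately show False
      using sum_abs[of "\<lambda>j. r j \<gamma>" S] sum_mono[of S "\<lambda>j. \<bar>r j \<gamma>\<bar>" t] by fastforce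
  qed
  then have "wmeasure w {\<gamma>. c < \<bar>\<Sum>j\<in>S. r j \<gamma>\<bar>} \<le> (\<Sum>j\<in>S. wmeasure w {\<gamma>. t j < \<bar>r j \<gamma>\<bar>})"
    using wmeasure_mono wmeasure_UN_le[OF assms(2)] order_trans by blast
  also have "\<dots> \<le> (\<Sum>j\<in>S. ennreal ((1 / 2) ^ Suc j * (1 / c) powr p))"
  proof (rule sum_mono)
    fix j assume "j \<in> S"
    have "(1 / 4 :: real) ^ Suc j = (1 / 2) ^ Suc j * (1 / 2) ^ Suc j"
      by (simp add: power_mult_distrib[symmetric])
    then have quot: "(1 / 4 :: real) ^ Suc j / t j = (1 / 2) ^ Suc j * (1 / c)"
      using \<open>0 < c\<close> unfolding t_def by simp
    have "wmeasure w {\<gamma>. t j < \<bar>r j \<gamma>\<bar>} \<le> ennreal (((1 / 4) ^ Suc j / t j) powr p)"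
      using \<open>0 < c\<close> by (intro wlnorm_leD small \<open>j \<in> S\<close>) (auto simp: t_def)
    also have "((1 / 4 :: real) ^ Suc j / t j) powr p = ((1 / 2) ^ Suc j) powr p * (1 / c) powr p"
      unfolding quot using \<open>0 < c\<close> by (intro powr_mult)
    also have "\<dots> \<le> (1 / 2) ^ Suc j * (1 / c) powr p"
      using assms(1) by (intro mult_right_mono powr_le_one_le) (auto simp del: power_Suc intro: power_le_one)
    finally show "wmeasure w {\<gamma>. t j < \<bar>r j \<gamma>\<bar>} \<le> ennreal ((1 / 2) ^ Suc j * (1 / c) powr p)"
      by (simp add: ennreal_leI)
  qed
  also have "\<dots> = ennreal ((\<Sum>j\<in>S. (1 / 2) ^ Suc j) * (1 / c) powr p)"
    by (simp add: sum_ennreal sum_distrib_right)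
  also have "\<dots> \<le> ennreal ((1 / c) powr p)"
    using sum_half_powers_le_one[OF assms(2)]
    by (intro ennreal_leI mult_left_le_one_le) (auto intro: sum_nonneg)
  finally show "wmeasure w {\<gamma>. c < \<bar>\<Sum>j\<in>S. r j \<gamma>\<bar>} \<le> ennreal ((1 / c) powr p)" .
qed

section \<open>Disjointly supported functions\<close>

lemma level_set_disjoint_sum:
  fixes f :: "'i \<Rightarrow> 'a \<Rightarrow> real"
  assumes "disjoint_family D" and support: "\<And>j \<gamma>. \<gamma> \<notin> D j \<Longrightarrow> f j \<gamma> = 0"
    and "finite S" "0 < c"
  shows "{\<gamma>. c < \<bar>\<Sum>j\<in>S. f j \<gamma>\<bar>} = (\<Union>j\<in>S. {\<gamma>. c < \<bar>f j \<gamma>\<bar>})"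
proof -
  have single: "(\<Sum>i\<in>S. f i \<gamma>) = f j \<gamma>" if "j \<in> S" "\<gamma> \<in> D j" for j \<gamma>
  proof -
    have "f i \<gamma> = 0" if "i \<in> S - {j}" for i
    proof -
      have "D i \<inter> D j = {}"
        using disjoint_family_onD[OF \<open>disjoint_family D\<close>] that by auto
      then show ?thesis using \<open>\<gamma> \<in> D j\<close> support by blast
    qed
    then show ?thesis using \<open>finite S\<close> \<open>j \<in> S\<close> by (simp add: sum.remove)
  qed
  show ?thesis
  proof (intro set_eqI iffI)
    fix \<gamma> assume \<gamma>: "\<gamma> \<in> {\<gamma>. c < \<bar>\<Sum>j\<in>S. f j \<gamma>\<bar>}"
    have "\<exists>j\<in>S. \<gamma> \<in> D j"
    proof (rule ccontr)
      assume "\<not> (\<exists>j\<in>S. \<gamma> \<in> D j)"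
      then have "(\<Sum>j\<in>S. f j \<gamma>) = 0" using support by simp
      with \<gamma> \<open>0 < c\<close> show False by simp
    qed
    then obtain j where "j \<in> S" "\<gamma> \<in> D j" by blast
    then show "\<gamma> \<in> (\<Union>j\<in>S. {\<gamma>. c < \<bar>f j \<gamma>\<bar>})" using \<gamma> single by auto
  next
    fix \<gamma> assume "\<gamma> \<in> (\<Union>j\<in>S. {\<gamma>. c < \<bar>f j \<gamma>\<bar>})"
    then obtain j where "j \<in> S" "c < \<bar>f j \<gamma>\<bar>" by blast
    moreover from this have "\<gamma> \<in> D j" using support \<open>0 < c\<close> by fastforce
    ultimately show "\<gamma> \<in> {\<gamma>. c < \<bar>\<Sum>j\<in>S. f j \<gamma>\<bar>}" using single by simp
  qed
qed

lemma wlnorm_disjoint_sum_le: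
  assumes "disjoint_family D" "\<And>j \<gamma>. \<gamma> \<notin> D j \<Longrightarrow> f j \<gamma> = 0" "finite S"
    and "0 \<le> b" "\<And>j. j \<in> S \<Longrightarrow> wlnorm p w (f j) \<le> ennreal b"
  shows "wlnorm p w (\<lambda>\<gamma>. \<Sum>j\<in>S. f j \<gamma>) \<le> ennreal (card S powr (1 / p) * b)"
proof (rule wlnorm_leI)
  show "0 \<le> card S powr (1 / p) * b" using \<open>0 \<le> b\<close> by simp
  fix c :: real assume "0 < c"
  have "{\<gamma>. c < \<bar>\<Sum>j\<in>S. f j \<gamma>\<bar>} = (\<Union>j\<in>S. {\<gamma>. c < \<bar>f j \<gamma>\<bar>})"
    by (rule level_set_disjoint_sum) (use assms \<open>0 < c\<close> in auto)
  then have "wmeasure w {\<gamma>. c < \<bar>\<Sum>j\<in>S. f j \<gamma>\<bar>} \<le> (\<Sum>j\<in>S. wmeasure w {\<gamma>. c < \<bar>f j \<gamma>\<bar>})"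
    using wmeasure_UN_le[OF \<open>finite S\<close>] by simp
  also have "\<dots> \<le> (\<Sum>j\<in>S. ennreal ((b / c) powr p))"
    using assms(4,5) \<open>0 < c\<close> by (intro sum_mono wlnorm_leD) auto
  also have "\<dots> = ennreal (card S * (b / c) powr p)" by (simp add: ennreal_mult ennreal_of_nat_eq_real_of_nat)
  also have "card S * (b / c) powr p = (card S powr (1 / p)) powr p * (b / c) powr p"
    using p_pos by (simp add: powr_powr)
  also have "\<dots> = (card S powr (1 / p) * b / c) powr p"
    using \<open>0 \<le> b\<close> \<open>0 < c\<close> by (simp add: powr_mult[symmetric])
  finally show "wmeasure w {\<gamma>. c < \<bar>\<Sum>j\<in>S. f j \<gamma>\<bar>} \<le> ennreal ((card S powr (1 / p) * b / c) powr p)" .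
qed

lemma wmeasure_level_disjoint_finite_sum:
  fixes f :: "'i \<Rightarrow> 'a \<Rightarrow> real"
  assumes "disjoint_family D" "\<And>j. finite (D j)" and support: "\<And>j \<gamma>. \<gamma> \<notin> D j \<Longrightarrow> f j \<gamma> = 0"
    and "finite S" "0 < c"
  shows "wmeasure w {\<gamma>. c < \<bar>\<Sum>j\<in>S. f j \<gamma>\<bar>} = ennreal (\<Sum>j\<in>S. sum w {\<gamma> \<in> D j. c < \<bar>f j \<gamma>\<bar>})"
proof -
  have "\<gamma> \<in> D j" if "c < \<bar>f j \<gamma>\<bar>" for j \<gamma>
    using support[of \<gamma> j] that \<open>0 < c\<close> by (cases "\<gamma> \<in> D j") auto
  then have "{\<gamma>. c < \<bar>f j \<gamma>\<bar>} = {\<gamma> \<in> D j. c < \<bar>f j \<gamma>\<bar>}" for j by blast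
  then have "{\<gamma>. c < \<bar>\<Sum>j\<in>S. f j \<gamma>\<bar>} = (\<Union>j\<in>S. {\<gamma> \<in> D j. c < \<bar>f j \<gamma>\<bar>})"
    using level_set_disjoint_sum[OF assms(1) support \<open>finite S\<close> \<open>0 < c\<close>] by simp
  moreover have "sum w (\<Union>j\<in>S. {\<gamma> \<in> D j. c < \<bar>f j \<gamma>\<bar>}) = (\<Sum>j\<in>S. sum w {\<gamma> \<in> D j. c < \<bar>f j \<gamma>\<bar>})"
    using assms(1,2) \<open>finite S\<close>
    by (intro sum.UNION_disjoint) (auto simp: disjoint_family_on_def)
  ultimately show ?thesis using assms(2) \<open>finite S\<close> by (simp add: wmeasure_finite)
qed

lemma level_weight_powr_le:
  assumes "finite D" "\<And>\<gamma>. \<gamma> \<notin> D \<Longrightarrow> g \<gamma> = 0" "0 \<le> B" "wlnorm p w g \<le> ennreal B" "0 < c"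
  shows "c powr p * sum w {\<gamma> \<in> D. c < \<bar>g \<gamma>\<bar>} \<le> B powr p"
proof -
  have "\<gamma> \<in> D" if "c < \<bar>g \<gamma>\<bar>" for \<gamma> using assms(2)[of \<gamma>] that \<open>0 < c\<close> by (cases "\<gamma> \<in> D") auto
  then have "{\<gamma>. c < \<bar>g \<gamma>\<bar>} = {\<gamma> \<in> D. c < \<bar>g \<gamma>\<bar>}" by blast
  then have "ennreal (sum w {\<gamma> \<in> D. c < \<bar>g \<gamma>\<bar>}) \<le> ennreal ((B / c) powr p)"
    using wlnorm_leD[OF assms(3-5)] wmeasure_finite[of "{\<gamma> \<in> D. c < \<bar>g \<gamma>\<bar>}"] \<open>finite D\<close> by simp
  then have "sum w {\<gamma> \<in> D. c < \<bar>g \<gamma>\<bar>} \<le> (B / c) powr p" by simp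
  then have "c powr p * sum w {\<gamma> \<in> D. c < \<bar>g \<gamma>\<bar>} \<le> c powr p * (B / c) powr p"
    by (rule mult_left_mono) simp
  also have "\<dots> = B powr p" using \<open>0 \<le> B\<close> \<open>0 < c\<close> by (simp add: powr_divide)
  finally show ?thesis .
qed

lemma wlnorm_disjoint_sum_le_of_level_weights:
  fixes f :: "'i \<Rightarrow> 'a \<Rightarrow> real"
  assumes "disjoint_family D" "\<And>j. finite (D j)" "\<And>j \<gamma>. \<gamma> \<notin> D j \<Longrightarrow> f j \<gamma> = 0" "finite S" "0 \<le> M"
    and levels: "\<And>c. 0 < c \<Longrightarrow> (\<Sum>j\<in>S. c powr p * sum w {\<gamma> \<in> D j. c < \<bar>f j \<gamma>\<bar>}) \<le> M powr p"
  shows "wlnorm p w (\<lambda>\<gamma>. \<Sum>j\<in>S. f j \<gamma>) \<le> ennreal M"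
proof (rule wlnorm_leI[OF \<open>0 \<le> M\<close>])
  fix c :: real assume "0 < c"
  have "(\<Sum>j\<in>S. sum w {\<gamma> \<in> D j. c < \<bar>f j \<gamma>\<bar>}) = (\<Sum>j\<in>S. c powr p * sum w {\<gamma> \<in> D j. c < \<bar>f j \<gamma>\<bar>}) / c powr p"
    using \<open>0 < c\<close> by (simp add: sum_divide_distrib)
  also have "\<dots> \<le> M powr p / c powr p" using levels[OF \<open>0 < c\<close>] by (simp add: divide_right_mono)
  also have "\<dots> = (M / c) powr p" using \<open>0 \<le> M\<close> \<open>0 < c\<close> by (simp add: powr_divide)
  finally show "wmeasure w {\<gamma>. c < \<bar>\<Sum>j\<in>S. f j \<gamma>\<bar>} \<le> ennreal ((M / c) powr p)"
    using wmeasure_level_disjoint_finite_sum[OF assms(1-4) \<open>0 < c\<close>] by (simp add: ennreal_leI)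
qed

lemma level_weight_vanishes_at_ends:
  assumes "finite D" "0 < e"
  shows "\<exists>l U. 0 < l \<and> (\<forall>c>0. c < l \<or> U < c \<longrightarrow> c powr p * sum w {\<gamma> \<in> D. c < \<bar>f \<gamma>\<bar>} \<le> e)"
proof -
  define W where "W = sum w D"
  define l where "l = (e / (W + 1)) powr (1 / p)"
  define U where "U = (\<Sum>\<gamma>\<in>D. \<bar>f \<gamma>\<bar>)"
  have "0 \<le> W" unfolding W_def by (simp add: sum_nonneg weight_nonneg)
  have "c powr p * sum w {\<gamma> \<in> D. c < \<bar>f \<gamma>\<bar>} \<le> e" if "0 < c" "c < l \<or> U < c" for c
  proof (cases "c < l")
    case True
    have "c powr p \<le> l powr p" using True \<open>0 < c\<close> p_pos by (intro powr_mono2) auto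
    also have "l powr p = e / (W + 1)"
      unfolding l_def powr_powr using p_pos \<open>0 < e\<close> \<open>0 \<le> W\<close> by simp
    finally have "c powr p \<le> e / (W + 1)" .
    moreover have "sum w {\<gamma> \<in> D. c < \<bar>f \<gamma>\<bar>} \<le> W"
      unfolding W_def using \<open>finite D\<close> by (intro sum_mono2) (auto simp: weight_nonneg)
    ultimately have "c powr p * sum w {\<gamma> \<in> D. c < \<bar>f \<gamma>\<bar>} \<le> e / (W + 1) * W"
      using \<open>0 < e\<close> \<open>0 \<le> W\<close> by (intro mult_mono) (auto simp: sum_nonneg weight_nonneg)
    also have "\<dots> = e * (W / (W + 1))" by simp
    also have "\<dots> \<le> e" using \<open>0 \<le> W\<close> \<open>0 < e\<close> by (intro mult_left_le) auto
    finally show ?thesis .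
  next
    case False
    then have "U < c" using that(2) by simp
    moreover have "\<bar>f \<gamma>\<bar> \<le> U" if "\<gamma> \<in> D" for \<gamma>
      unfolding U_def using \<open>finite D\<close> that by (intro member_le_sum) auto
    ultimately have "\<not> c < \<bar>f \<gamma>\<bar>" if "\<gamma> \<in> D" for \<gamma> using that by force
    then have empty: "{\<gamma> \<in> D. c < \<bar>f \<gamma>\<bar>} = {}" by blast
    show ?thesis unfolding empty using \<open>0 < e\<close> by simp
  qed
  moreover have "0 < l" unfolding l_def using \<open>0 < e\<close> \<open>0 \<le> W\<close> by simp
  ultimately show ?thesis by blast
qed

section \<open>The gliding hump\<close>

lemma gliding_hump_step:
  assumes "1 \<le> p" and null: "\<And>\<gamma>. ((\<lambda>n. h n \<gamma>) \<longlongrightarrow> 0) sequentially"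
    and tails: "\<And>n e. 0 < e \<Longrightarrow> \<exists>F. finite F \<and> wlnorm p w (\<lambda>\<gamma>. if \<gamma> \<in> F then 0 else h n \<gamma>) \<le> ennreal e"
    and "finite G" "0 < \<delta>"
  shows "\<exists>n'>n. \<exists>F. finite F \<and> G \<subseteq> F \<and> wlnorm p w (\<lambda>\<gamma>. if \<gamma> \<in> F - G then 0 else h n' \<gamma>) \<le> ennreal \<delta>"
proof -
  have "0 < \<delta> / 4" using \<open>0 < \<delta>\<close> by simp
  obtain N where N: "\<And>n'. N \<le> n' \<Longrightarrow> wlnorm p w (\<lambda>\<gamma>. if \<gamma> \<in> G then h n' \<gamma> else 0) \<le> ennreal (\<delta> / 4)"
    using eventually_wlnorm_restrict_finite_le[of G h, OF \<open>finite G\<close> null \<open>0 < \<delta> / 4\<close>]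
    unfolding eventually_sequentially by blast
  define n' where "n' = max N (Suc n)"
  have "n < n'" and head: "wlnorm p w (\<lambda>\<gamma>. if \<gamma> \<in> G then h n' \<gamma> else 0) \<le> ennreal (\<delta> / 4)"
    using N[of n'] unfolding n'_def by auto
  obtain F where "finite F" and tail: "wlnorm p w (\<lambda>\<gamma>. if \<gamma> \<in> F then 0 else h n' \<gamma>) \<le> ennreal (\<delta> / 4)"
    using tails[OF \<open>0 < \<delta> / 4\<close>] by blast
  have "wlnorm p w (\<lambda>\<gamma>. if \<gamma> \<in> (G \<union> F) - G then 0 else h n' \<gamma>)
      \<le> 2 * (wlnorm p w (\<lambda>\<gamma>. if \<gamma> \<in> G then h n' \<gamma> else 0) + wlnorm p w (\<lambda>\<gamma>. if \<gamma> \<in> F then 0 else h n' \<gamma>))"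
    by (rule wlnorm_add_le[OF \<open>1 \<le> p\<close>]) auto
  also have "\<dots> \<le> 2 * (ennreal (\<delta> / 4) + ennreal (\<delta> / 4))"
    using head tail by (intro mult_left_mono add_mono) auto
  also have "\<dots> = ennreal \<delta>" using \<open>0 < \<delta>\<close> by (intro two_mult_ennreal_quarters) simp
  finally show ?thesis using \<open>n < n'\<close> \<open>finite G\<close> \<open>finite F\<close> by blast
qed

lemma gliding_hump:
  fixes h :: "nat \<Rightarrow> 'a \<Rightarrow> real" and \<delta> :: "nat \<Rightarrow> real"
  assumes "1 \<le> p" and null: "\<And>\<gamma>. ((\<lambda>n. h n \<gamma>) \<longlongrightarrow> 0) sequentially"
    and tails: "\<And>n e. 0 < e \<Longrightarrow> \<exists>F. finite F \<and> wlnorm p w (\<lambda>\<gamma>. if \<gamma> \<in> F then 0 else h n \<gamma>) \<le> ennreal e"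
    and "\<And>j. 0 < \<delta> j"
  obtains m D where "strict_mono m" "\<And>j. finite (D j)" "disjoint_family D"
    "\<And>j. wlnorm p w (\<lambda>\<gamma>. if \<gamma> \<in> D j then 0 else h (m j) \<gamma>) \<le> ennreal (\<delta> j)"
proof -
  let ?P = "\<lambda>(j::nat) (x :: nat \<times> 'a set). finite (snd x)"
  let ?Q = "\<lambda>j (x :: nat \<times> 'a set) y. fst x < fst y \<and> snd x \<subseteq> snd y \<and>
      wlnorm p w (\<lambda>\<gamma>. if \<gamma> \<in> snd y - snd x then 0 else h (fst y) \<gamma>) \<le> ennreal (\<delta> j)"
  have step: "\<exists>y. ?P (Suc j) y \<and> ?Q j x y" if Px: "?P j x" for j x
  proof -
    obtain n' F where "fst x < n'" "finite F" "snd x \<subseteq> F"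
      "wlnorm p w (\<lambda>\<gamma>. if \<gamma> \<in> F - snd x then 0 else h n' \<gamma>) \<le> ennreal (\<delta> j)"
      using gliding_hump_step[OF assms(1) null tails Px \<open>0 < \<delta> j\<close>, of "fst x"] by blast
    then show ?thesis by (intro exI[of _ "(n', F)"]) (unfold fst_conv snd_conv, blast)
  qed
  have "\<exists>x. ?P 0 x" by (intro exI[of _ "(0, {})"]) simp
  then obtain x where x: "\<And>j. ?P j (x j) \<and> ?Q j (x j) (x (Suc j))"
    using dependent_nat_choice[of ?P ?Q, OF _ step] by blast
  define m where "m j = fst (x (Suc j))" for j
  define D where "D j = snd (x (Suc j)) - snd (x j)" for j
  have "strict_mono m"
    unfolding m_def by (rule strict_monoI_Suc) (use x in blast)
  moreover have "finite (D j)" for j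
    unfolding D_def using x[of "Suc j"] by blast
  moreover have "disjoint_family D"
  proof -
    have "snd (x i) \<subseteq> snd (x k)" if "i \<le> k" for i k
      using lift_Suc_mono_le[of "\<lambda>j. snd (x j)", OF _ that] x by blast
    then have "D i \<subseteq> snd (x k)" if "i < k" for i k
      using that unfolding D_def by (meson Diff_subset Suc_leI subset_trans)
    then have "D i \<inter> D k = {}" if "i < k" for i k
      using that unfolding D_def by blast
    then show ?thesis unfolding disjoint_family_on_def by (metis Int_commute linorder_neqE_nat)
  qed
  moreover have "wlnorm p w (\<lambda>\<gamma>. if \<gamma> \<in> D j then 0 else h (m j) \<gamma>) \<le> ennreal (\<delta> j)" for j
    unfolding D_def m_def using x[of j] by blast
  ultimately show ?thesis using that by blast
qed

lemma l2_linear_unit_vectors_tendsto_zero: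
  assumes T: "l2_linear T" and bounded: "\<And>x. x \<in> l2seq \<Longrightarrow> wlnorm p w (T x) \<le> ennreal (B * l2norm x)"
    and "0 \<le> B" "0 < w \<gamma>"
  shows "((\<lambda>k. T (indicator {k}) \<gamma>) \<longlongrightarrow> 0) sequentially"
proof -
  define v where "v k = T (indicator {k}) \<gamma>" for k
  define C where "C = B * w \<gamma> powr (-1 / p)"
  have "(\<Sum>k<n. (v k)\<^sup>2) \<le> C\<^sup>2" for n
  proof -
    define s where "s = (\<Sum>k<n. (v k)\<^sup>2)"
    have "0 \<le> s" unfolding s_def by (simp add: sum_nonneg)
    define x where "x i = (\<Sum>k<n. v k * indicator {k} i)" for i
    have x_eq: "x i = (if i < n then v i else 0)" for i
      unfolding x_def sum_scaled_indicator_singleton[OF finite_lessThan] by simp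
    have "x \<in> l2seq"
      by (rule l2seq_finite_support[of "{..<n}"]) (simp_all add: x_eq)
    have "l2norm x = sqrt s"
      unfolding s_def by (subst l2norm_finite_support[of "{..<n}"]) (simp_all add: x_eq)
    \<comment> \<open>Testing \<open>T\<close> against \<open>x = \<Sum> v\<^sub>k e\<^sub>k\<close> at \<open>\<gamma>\<close> returns \<open>\<Sum> v\<^sub>k\<^sup>2\<close>.\<close>
    have "T x \<gamma> = s"
      unfolding x_def l2_linear_sum[OF T finite_lessThan] s_def v_def by (simp add: power2_eq_square)
    moreover have "\<bar>T x \<gamma>\<bar> \<le> B * l2norm x * w \<gamma> powr (-1 / p)"
      using bounded[OF \<open>x \<in> l2seq\<close>] \<open>0 \<le> B\<close> \<open>0 < w \<gamma>\<close>
      by (intro wlnorm_point_bound) (simp_all add: \<open>l2norm x = sqrt s\<close> \<open>0 \<le> s\<close>)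
    ultimately have "s \<le> C * sqrt s" using \<open>l2norm x = sqrt s\<close> unfolding C_def by (simp add: mult_ac)
    moreover have "0 \<le> C" unfolding C_def using \<open>0 \<le> B\<close> by simp
    ultimately show ?thesis using \<open>0 \<le> s\<close> unfolding s_def by (intro le_square_of_le_mult_sqrt)
  qed
  then have "summable (\<lambda>k. (v k)\<^sup>2)" by (intro summableI_nonneg_bounded) auto
  then have "(\<lambda>k. sqrt ((v k)\<^sup>2)) \<longlonglongrightarrow> sqrt 0"
    by (intro tendsto_real_sqrt summable_LIMSEQ_zero)
  then show ?thesis unfolding v_def by (simp add: tendsto_rabs_zero_iff)
qed

lemma l2_embedding_gliding_hump:
  fixes T :: "(nat \<Rightarrow> real) \<Rightarrow> 'a \<Rightarrow> real"
  assumes "1 \<le> p" "\<And>\<gamma>. 0 < w \<gamma>" "l2_linear T" "\<And>x. x \<in> l2seq \<Longrightarrow> T x \<in> mpinf p w" "0 \<le> B"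
    and upper: "\<And>x. x \<in> l2seq \<Longrightarrow> wlnorm p w (T x) \<le> ennreal (B * l2norm x)"
  obtains m :: "nat \<Rightarrow> nat" and D :: "nat \<Rightarrow> 'a set"
  where "strict_mono m" "\<And>j. finite (D j)" "disjoint_family D"
    "\<And>j. wlnorm p w (\<lambda>\<gamma>. if \<gamma> \<in> D j then 0 else T (indicator {m j}) \<gamma>) \<le> ennreal ((1 / 4) ^ Suc j)"
proof -
  define h where "h k = T (indicator {k})" for k
  have null: "((\<lambda>k. h k \<gamma>) \<longlongrightarrow> 0) sequentially" for \<gamma>
    unfolding h_def by (rule l2_linear_unit_vectors_tendsto_zero[OF assms(3) upper assms(5) assms(2)])
  have tails: "\<exists>F. finite F \<and> wlnorm p w (\<lambda>\<gamma>. if \<gamma> \<in> F then 0 else h n \<gamma>) \<le> ennreal e" if "0 < e" for n e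
  proof -
    have "T (indicator {n}) \<in> mpinf p w" by (simp add: assms(4) l2seq_indicator)
    with mpinf_tail_le[OF \<open>1 \<le> p\<close> _ \<open>0 < e\<close>] show ?thesis unfolding h_def by blast
  qed
  obtain m :: "nat \<Rightarrow> nat" and D :: "nat \<Rightarrow> 'a set"
    where "strict_mono m" "\<And>j. finite (D j)" "disjoint_family D"
    "\<And>j. wlnorm p w (\<lambda>\<gamma>. if \<gamma> \<in> D j then 0 else h (m j) \<gamma>) \<le> ennreal ((1 / 4) ^ Suc j)"
    by (rule gliding_hump[of h "\<lambda>j. (1 / 4) ^ Suc j", OF \<open>1 \<le> p\<close> null tails]) auto
  then show ?thesis unfolding h_def by (rule that)
qed

text \<open>The blocks \<open>f\<^sub>j\<close> are the images of a subsequence of unit vectors, cut down to their humps.\<close>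

lemma l2_embedding_disjoint_blocks:
  fixes T :: "(nat \<Rightarrow> real) \<Rightarrow> 'a \<Rightarrow> real"
  assumes "1 \<le> p" "\<And>\<gamma>. 0 < w \<gamma>" "l2_linear T" "\<And>x. x \<in> l2seq \<Longrightarrow> T x \<in> mpinf p w" "0 \<le> B"
    and lower: "\<And>x. x \<in> l2seq \<Longrightarrow> ennreal (A * l2norm x) \<le> wlnorm p w (T x)"
    and upper: "\<And>x. x \<in> l2seq \<Longrightarrow> wlnorm p w (T x) \<le> ennreal (B * l2norm x)"
  obtains D :: "nat \<Rightarrow> 'a set" and f :: "nat \<Rightarrow> 'a \<Rightarrow> real" where "\<And>j. finite (D j)" "disjoint_family D"
    "\<And>j \<gamma>. \<gamma> \<notin> D j \<Longrightarrow> f j \<gamma> = 0" "\<And>j. wlnorm p w (f j) \<le> ennreal B"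
    "\<And>S. finite S \<Longrightarrow> wlnorm p w (\<lambda>\<gamma>. \<Sum>j\<in>S. f j \<gamma>) \<le> 2 * (ennreal (B * sqrt (card S)) + 1)"
    "\<And>S. finite S \<Longrightarrow> ennreal (A * sqrt (card S)) \<le> 2 * (wlnorm p w (\<lambda>\<gamma>. \<Sum>j\<in>S. f j \<gamma>) + 1)"
proof -
  define h where "h k = T (indicator {k})" for k
  obtain m :: "nat \<Rightarrow> nat" and D :: "nat \<Rightarrow> 'a set"
    where "strict_mono m" "\<And>j. finite (D j)" "disjoint_family D"
    and hump: "\<And>j. wlnorm p w (\<lambda>\<gamma>. if \<gamma> \<in> D j then 0 else h (m j) \<gamma>) \<le> ennreal ((1 / 4) ^ Suc j)"
    unfolding h_def by (rule l2_embedding_gliding_hump[OF assms(1-5) upper]) auto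
  define f where "f j \<gamma> = (if \<gamma> \<in> D j then h (m j) \<gamma> else 0)" for j \<gamma>
  define r where "r j \<gamma> = (if \<gamma> \<in> D j then 0 else h (m j) \<gamma>)" for j \<gamma>
  show ?thesis
  proof (rule that[of D f])
    show "wlnorm p w (f j) \<le> ennreal B" for j
    proof -
      have "wlnorm p w (f j) \<le> wlnorm p w (h (m j))" by (rule wlnorm_mono) (simp add: f_def)
      also have "\<dots> \<le> ennreal B"
        using upper[of "indicator {m j}"] unfolding h_def by (simp add: l2seq_indicator l2norm_indicator)
      finally show ?thesis .
    qed
    fix S :: "nat set" assume "finite S"
    have "inj_on m S" using \<open>strict_mono m\<close> by (rule strict_mono_imp_inj_on)
    define Y where "Y = (\<lambda>\<gamma>. \<Sum>j\<in>S. h (m j) \<gamma>)"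
    have "Y = T (indicator (m ` S))"
      unfolding Y_def h_def by (rule l2_linear_indicator_image[OF assms(3) \<open>finite S\<close> \<open>inj_on m S\<close>])
    moreover have "l2norm (indicator (m ` S)) = sqrt (card S)"
      using \<open>finite S\<close> \<open>inj_on m S\<close> by (simp add: l2norm_indicator card_image)
    ultimately have Y: "ennreal (A * sqrt (card S)) \<le> wlnorm p w Y"
      "wlnorm p w Y \<le> ennreal (B * sqrt (card S))"
      using lower[of "indicator (m ` S)"] upper[of "indicator (m ` S)"] \<open>finite S\<close>
      by (simp_all add: l2seq_indicator)
    have "Y \<gamma> = (\<Sum>j\<in>S. f j \<gamma>) + (\<Sum>j\<in>S. r j \<gamma>)" for \<gamma>
      unfolding Y_def f_def r_def sum.distrib[symmetric] by (rule sum.cong) auto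
    moreover have "wlnorm p w (\<lambda>\<gamma>. \<Sum>j\<in>S. r j \<gamma>) \<le> 1"
      using wlnorm_sum_le_one[OF \<open>1 \<le> p\<close> \<open>finite S\<close>] hump unfolding r_def by simp
    ultimately have X_Y: "wlnorm p w (\<lambda>\<gamma>. \<Sum>j\<in>S. f j \<gamma>) \<le> 2 * (wlnorm p w Y + 1)"
      and Y_X: "wlnorm p w Y \<le> 2 * (wlnorm p w (\<lambda>\<gamma>. \<Sum>j\<in>S. f j \<gamma>) + 1)"
      by (rule wlnorm_perturb_le[OF \<open>1 \<le> p\<close>])+
    note X_Y
    also have "2 * (wlnorm p w Y + 1) \<le> 2 * (ennreal (B * sqrt (card S)) + 1)"
      using Y(2) by (intro mult_left_mono add_right_mono) simp_all
    finally show "wlnorm p w (\<lambda>\<gamma>. \<Sum>j\<in>S. f j \<gamma>) \<le> 2 * (ennreal (B * sqrt (card S)) + 1)" .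
    from Y(1) Y_X show "ennreal (A * sqrt (card S)) \<le> 2 * (wlnorm p w (\<lambda>\<gamma>. \<Sum>j\<in>S. f j \<gamma>) + 1)"
      by (rule order_trans)
  qed (use \<open>\<And>j. finite (D j)\<close> \<open>disjoint_family D\<close> in \<open>auto simp: f_def\<close>)
qed

section \<open>Disjoint blocks of square-root growth\<close>

lemma disjoint_blocks_sqrt_growth_impossible_gt_2:
  fixes f :: "nat \<Rightarrow> 'a \<Rightarrow> real"
  assumes "2 < p" "0 < A" "0 \<le> B" "disjoint_family D" "\<And>j \<gamma>. \<gamma> \<notin> D j \<Longrightarrow> f j \<gamma> = 0"
    and norm_le: "\<And>j. wlnorm p w (f j) \<le> ennreal B"
    and lower: "\<And>S. finite S \<Longrightarrow> ennreal (A * sqrt (card S)) \<le> 2 * (wlnorm p w (\<lambda>\<gamma>. \<Sum>j\<in>S. f j \<gamma>) + 1)"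
  shows False
proof -
  have "A * sqrt n \<le> 2 * (B * real n powr (1 / p) + 1)" for n :: nat
  proof -
    have "wlnorm p w (\<lambda>\<gamma>. \<Sum>j<n. f j \<gamma>) \<le> ennreal (card {..<n} powr (1 / p) * B)"
      by (rule wlnorm_disjoint_sum_le) (use assms in auto)
    then have sum_le: "wlnorm p w (\<lambda>\<gamma>. \<Sum>j<n. f j \<gamma>) \<le> ennreal (B * real n powr (1 / p))"
      by (simp add: mult.commute)
    have "ennreal (A * sqrt n) \<le> 2 * (wlnorm p w (\<lambda>\<gamma>. \<Sum>j<n. f j \<gamma>) + 1)"
      using lower[of "{..<n}"] by simp
    also have "\<dots> \<le> 2 * (ennreal (B * real n powr (1 / p)) + 1)"
      using sum_le by (intro mult_left_mono add_right_mono) simp_all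
    also have "\<dots> = ennreal (2 * (B * real n powr (1 / p) + 1))"
      using \<open>0 \<le> B\<close> by (intro two_mult_ennreal_add_one) simp
    finally show ?thesis
      by (rule ennreal_le_iff[THEN iffD1, rotated]) (use \<open>0 \<le> B\<close> in simp)
  qed
  moreover have "eventually (\<lambda>n. 2 * (B * real n powr (1 / p) + 1) < A * sqrt n) sequentially"
    using \<open>2 < p\<close> \<open>0 < A\<close> by real_asymp
  ultimately show False by (auto dest: eventually_happens'[OF sequentially_bot] simp: not_less[symmetric])
qed

lemma disjoint_blocks_level_weights_spread:
  fixes f :: "nat \<Rightarrow> 'a \<Rightarrow> real"
  assumes "p < 2" "0 < B" "disjoint_family D" "\<And>j. finite (D j)" "\<And>j \<gamma>. \<gamma> \<notin> D j \<Longrightarrow> f j \<gamma> = 0"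
    and upper: "\<And>S. finite S \<Longrightarrow> wlnorm p w (\<lambda>\<gamma>. \<Sum>j\<in>S. f j \<gamma>) \<le> 2 * (ennreal (B * sqrt (card S)) + 1)"
    and "0 < L" "0 < e"
  shows "\<exists>j\<ge>N. sum w {\<gamma> \<in> D j. L < \<bar>f j \<gamma>\<bar>} \<le> e"
proof (rule frequently_le_of_sublinear_block_sums)
  fix s :: nat
  have "wlnorm p w (\<lambda>\<gamma>. \<Sum>j\<in>{N..<N + s}. f j \<gamma>) \<le> 2 * (ennreal (B * sqrt s) + 1)"
    using upper[of "{N..<N + s}"] by simp
  also have "\<dots> = ennreal (2 * (B * sqrt s + 1))"
    using \<open>0 < B\<close> by (intro two_mult_ennreal_add_one) simp
  finally have "wlnorm p w (\<lambda>\<gamma>. \<Sum>j\<in>{N..<N + s}. f j \<gamma>) \<le> ennreal (2 * (B * sqrt s + 1))" .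
  from wlnorm_leD[OF _ this \<open>0 < L\<close>]
  show "(\<Sum>j\<in>{N..<N + s}. sum w {\<gamma> \<in> D j. L < \<bar>f j \<gamma>\<bar>}) \<le> (2 * (B * sqrt s + 1) / L) powr p"
    using assms(3-5) \<open>0 < B\<close> \<open>0 < L\<close> by (simp add: wmeasure_level_disjoint_finite_sum)
next
  show "eventually (\<lambda>s. (2 * (B * sqrt s + 1) / L) powr p < e * real s) sequentially"
    using p_pos \<open>p < 2\<close> \<open>0 < B\<close> \<open>0 < L\<close> \<open>0 < e\<close> by real_asymp
qed

lemma disjoint_blocks_bounded_subsequence:
  fixes f :: "nat \<Rightarrow> 'a \<Rightarrow> real"
  assumes "disjoint_family D" "\<And>j. finite (D j)" "\<And>j \<gamma>. \<gamma> \<notin> D j \<Longrightarrow> f j \<gamma> = 0"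
    and "0 \<le> B" "\<And>j. wlnorm p w (f j) \<le> ennreal B"
    and spread: "\<And>L e N. 0 < L \<Longrightarrow> 0 < e \<Longrightarrow> \<exists>j\<ge>N. sum w {\<gamma> \<in> D j. L < \<bar>f j \<gamma>\<bar>} \<le> e"
  obtains J :: "nat \<Rightarrow> nat" where "strict_mono J"
    "\<And>n. wlnorm p w (\<lambda>\<gamma>. \<Sum>i<n. f (J i) \<gamma>) \<le> ennreal ((B powr p + 1) powr (1 / p))"
proof -
  define \<sigma> where "\<sigma> j c = sum w {\<gamma> \<in> D j. c < \<bar>f j \<gamma>\<bar>}" for j c
  have bounded: "c powr p * \<sigma> j c \<le> B powr p" if "0 < c" for j c
    unfolding \<sigma>_def using assms(2-5) that by (rule level_weight_powr_le)
  have nonneg: "0 \<le> \<sigma> j c" if "0 < c" for j c unfolding \<sigma>_def by (simp add: sum_nonneg weight_nonneg)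
  have antimono: "\<sigma> j c' \<le> \<sigma> j c" if "0 < c" "c \<le> c'" for j c c'
    unfolding \<sigma>_def using assms(2) that by (intro sum_mono2) (auto simp: weight_nonneg)
  have ends: "\<exists>l U. 0 < l \<and> (\<forall>c>0. c < l \<or> U < c \<longrightarrow> c powr p * \<sigma> j c \<le> e)" if "0 < e" for j e
    unfolding \<sigma>_def using assms(2) that by (rule level_weight_vanishes_at_ends)
  have spread_levels: "\<exists>j\<ge>N. \<sigma> j L \<le> e" if "0 < L" "0 < e" for L e N
    unfolding \<sigma>_def using that by (rule spread)
  obtain J :: "nat \<Rightarrow> nat" where "strict_mono J"
    and J: "\<And>n c. 0 < c \<Longrightarrow> (\<Sum>i<n. c powr p * \<sigma> (J i) c) \<le> B powr p + 1"
    using level_separated_subsequence[OF p_pos nonneg antimono bounded ends spread_levels] by blast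
  have "disjoint_family (D \<circ> J)"
    using \<open>disjoint_family D\<close> strict_mono_imp_inj_on[OF \<open>strict_mono J\<close>]
    unfolding disjoint_family_on_def by (auto dest: injD)
  have "((B powr p + 1) powr (1 / p)) powr p = B powr p + 1"
    using p_pos by (simp add: powr_powr add_nonneg_nonneg)
  then have "wlnorm p w (\<lambda>\<gamma>. \<Sum>i<n. f (J i) \<gamma>) \<le> ennreal ((B powr p + 1) powr (1 / p))" for n
    using J[of _ n] assms(2,3) unfolding \<sigma>_def
    by (intro wlnorm_disjoint_sum_le_of_level_weights[where D="D \<circ> J" and f="\<lambda>i. f (J i)",
          OF \<open>disjoint_family (D \<circ> J)\<close>]) auto
  with \<open>strict_mono J\<close> show ?thesis using that by blast
qed

lemma disjoint_blocks_sqrt_growth_impossible_lt_2: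
  fixes f :: "nat \<Rightarrow> 'a \<Rightarrow> real"
  assumes "p < 2" "0 < A" "0 < B" "disjoint_family D" "\<And>j. finite (D j)"
    "\<And>j \<gamma>. \<gamma> \<notin> D j \<Longrightarrow> f j \<gamma> = 0" "\<And>j. wlnorm p w (f j) \<le> ennreal B"
    and upper: "\<And>S. finite S \<Longrightarrow> wlnorm p w (\<lambda>\<gamma>. \<Sum>j\<in>S. f j \<gamma>) \<le> 2 * (ennreal (B * sqrt (card S)) + 1)"
    and lower: "\<And>S. finite S \<Longrightarrow> ennreal (A * sqrt (card S)) \<le> 2 * (wlnorm p w (\<lambda>\<gamma>. \<Sum>j\<in>S. f j \<gamma>) + 1)"
  shows False
proof -
  define M where "M = (B powr p + 1) powr (1 / p)"
  have spread: "\<exists>j\<ge>N. sum w {\<gamma> \<in> D j. L < \<bar>f j \<gamma>\<bar>} \<le> e" if "0 < L" "0 < e" for L e N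
    by (rule disjoint_blocks_level_weights_spread[where D=D and f=f,
          OF \<open>p < 2\<close> \<open>0 < B\<close> assms(4-6) upper that])
  obtain J :: "nat \<Rightarrow> nat" where "strict_mono J"
    and bounded: "\<And>n. wlnorm p w (\<lambda>\<gamma>. \<Sum>i<n. f (J i) \<gamma>) \<le> ennreal M"
    using disjoint_blocks_bounded_subsequence[where D=D and f=f,
        OF assms(4-6) less_imp_le[OF \<open>0 < B\<close>] assms(7) spread]
    unfolding M_def by blast
  have "A * sqrt n \<le> 2 * (M + 1)" for n :: nat
  proof -
    have "inj_on J {..<n}" using \<open>strict_mono J\<close> by (rule strict_mono_imp_inj_on)
    then have "ennreal (A * sqrt n) \<le> 2 * (wlnorm p w (\<lambda>\<gamma>. \<Sum>i<n. f (J i) \<gamma>) + 1)"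
      using lower[of "J ` {..<n}"] by (simp add: card_image sum.reindex)
    also have "\<dots> \<le> 2 * (ennreal M + 1)"
      using bounded by (intro mult_left_mono add_right_mono) simp_all
    also have "\<dots> = ennreal (2 * (M + 1))" unfolding M_def by (intro two_mult_ennreal_add_one) simp
    finally show ?thesis by (rule ennreal_le_iff[THEN iffD1, rotated]) (simp add: M_def)
  qed
  moreover have "eventually (\<lambda>n. 2 * (M + 1) < A * sqrt n) sequentially"
    using \<open>0 < A\<close> by real_asymp
  ultimately show False by (auto dest: eventually_happens'[OF sequentially_bot] simp: not_less[symmetric])
qed

end

end

lemma l2_not_embeddable_mpinf:
  fixes w :: "'a \<Rightarrow> real" and T :: "(nat \<Rightarrow> real) \<Rightarrow> 'a \<Rightarrow> real"
  assumes "\<And>\<gamma>. 0 < w \<gamma>" "1 < p" "p \<noteq> 2" "l2_linear T" and into: "\<And>x. x \<in> l2seq \<Longrightarrow> T x \<in> mpinf p w"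
    and "0 < A"
    and lower: "\<And>x. x \<in> l2seq \<Longrightarrow> ennreal (A * l2norm x) \<le> wlnorm p w (T x)"
    and upper: "\<And>x. x \<in> l2seq \<Longrightarrow> wlnorm p w (T x) \<le> ennreal (B * l2norm x)"
  shows False
proof -
  have w_nonneg: "0 \<le> w \<gamma>" for \<gamma> using assms(1) by (rule less_imp_le)
  have "p > 0" "1 \<le> p" using \<open>1 < p\<close> by simp_all
  have "ennreal A \<le> ennreal B"
    using lower[of "indicator {0}"] upper[of "indicator {0}"]
    by (simp add: l2seq_indicator l2norm_indicator)
  then have "0 < B" using \<open>0 < A\<close> ennreal_neg[of B] by (cases "0 < B") auto
  show False
  proof (rule l2_embedding_disjoint_blocks[where w=w and p=p and T=T and A=A and B=B,
        OF w_nonneg \<open>p > 0\<close> \<open>1 \<le> p\<close> assms(1) assms(4) into less_imp_le[OF \<open>0 < B\<close>]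
        lower upper])
    fix D :: "nat \<Rightarrow> 'a set" and f :: "nat \<Rightarrow> 'a \<Rightarrow> real"
    assume blocks: "\<And>j. finite (D j)" "disjoint_family D" "\<And>j \<gamma>. \<gamma> \<notin> D j \<Longrightarrow> f j \<gamma> = 0"
      "\<And>j. wlnorm p w (f j) \<le> ennreal B"
      "\<And>S. finite S \<Longrightarrow> wlnorm p w (\<lambda>\<gamma>. \<Sum>j\<in>S. f j \<gamma>) \<le> 2 * (ennreal (B * sqrt (card S)) + 1)"
      "\<And>S. finite S \<Longrightarrow> ennreal (A * sqrt (card S)) \<le> 2 * (wlnorm p w (\<lambda>\<gamma>. \<Sum>j\<in>S. f j \<gamma>) + 1)"
    show False
    proof (cases "p < 2")
      case True
      show False
        by (rule disjoint_blocks_sqrt_growth_impossible_lt_2[where w=w and p=p and f=f and D=D,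
              OF w_nonneg \<open>p > 0\<close> True \<open>0 < A\<close> \<open>0 < B\<close> blocks(2,1,3-6)])
    next
      case False
      with \<open>p \<noteq> 2\<close> have "2 < p" by simp
      show False
        by (rule disjoint_blocks_sqrt_growth_impossible_gt_2[where w=w and p=p and f=f and D=D,
              OF w_nonneg \<open>p > 0\<close> \<open>2 < p\<close> \<open>0 < A\<close> less_imp_le[OF \<open>0 < B\<close>] blocks(2,3,4,6)])
    qed
  qed
qed

theorem theorem13:
  fixes w :: "'a \<Rightarrow> real" and p :: real
  assumes "\<And>\<gamma>. w \<gamma> > 0" and "1 < p" and "p \<noteq> 2"
  shows "\<not> (\<exists>T :: (nat \<Rightarrow> real) \<Rightarrow> ('a \<Rightarrow> real).
     (\<forall>x\<in>l2seq. \<forall>y\<in>l2seq. \<forall>a b. T (\<lambda>n. a * x n + b * y n) = (\<lambda>\<gamma>. a * T x \<gamma> + b * T y \<gamma>)) \<and>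
     (\<forall>x\<in>l2seq. T x \<in> mpinf p w) \<and>
     (\<exists>A B. 0 < A \<and> (\<forall>x\<in>l2seq. ennreal (A * l2norm x) \<le> wlnorm p w (T x)
                                 \<and> wlnorm p w (T x) \<le> ennreal (B * l2norm x))))"
  using l2_not_embeddable_mpinf[where w=w and p=p, OF assms] unfolding l2_linear_def by blast

end
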